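(* Let $1\le b<\frac{n}{2}-1$ and let $T$ be a tree attaining the maximum value of $M_2$ over $\mathcal{CT}^*_{n,b}$. If $T$ contains a pendent vertex adjacent to a branching vertex, then $T$ contains no pendent path of length greater than $2$.
   Context: A chemical tree is a tree with maximum degree at most $4$. A pendent vertex has degree $1$; a branching vertex has degree greater than $2$. A pendent path is a path $u_0\cdots u_r$ ($r\ge1$) with $u_0$ pendent, $u_r$ branching and all internal vertices of degree $2$; its length is $r$. $\mathcal{CT}^*_{n,b}$ is the class of all $n$-vertex chemical trees with exactly $b$ branching vertices. $M_2(G)=\sum_{uv\in E(G)}d_ud_v$, where $d_v$ is the degree of $v$. *)

theory Defs
  imports Complex_Main
begin

definition simple_graph :: "nat set \<Rightarrow> nat set set \<Rightarrow> bool" where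
  "simple_graph V E \<longleftrightarrow> finite V \<and>
     (\<forall>e\<in>E. \<exists>u v. u \<in> V \<and> v \<in> V \<and> u \<noteq> v \<and> e = {u, v})"

definition degree :: "nat set set \<Rightarrow> nat \<Rightarrow> nat" where
  "degree E v = card {e \<in> E. v \<in> e}"

definition adj :: "nat set set \<Rightarrow> nat \<Rightarrow> nat \<Rightarrow> bool" where
  "adj E u v \<longleftrightarrow> {u, v} \<in> E"

definition connected_graph :: "nat set \<Rightarrow> nat set set \<Rightarrow> bool" where
  "connected_graph V E \<longleftrightarrow>
     (\<forall>u\<in>V. \<forall>v\<in>V. (u, v) \<in> {(x, y). adj E x y}\<^sup>*)"

definition is_tree :: "nat set \<Rightarrow> nat set set \<Rightarrow> bool" where
  "is_tree V E \<longleftrightarrow> simple_graph V E \<and> V \<noteq> {} \<and> connected_graph V E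
     \<and> card E + 1 = card V"

definition chemical_tree :: "nat set \<Rightarrow> nat set set \<Rightarrow> bool" where
  "chemical_tree V E \<longleftrightarrow> is_tree V E \<and> (\<forall>v\<in>V. degree E v \<le> 4)"

definition pendent :: "nat set set \<Rightarrow> nat \<Rightarrow> bool" where
  "pendent E v \<longleftrightarrow> degree E v = 1"

definition branching :: "nat set set \<Rightarrow> nat \<Rightarrow> bool" where
  "branching E v \<longleftrightarrow> degree E v > 2"

definition branching_vertices :: "nat set \<Rightarrow> nat set set \<Rightarrow> nat set" where
  "branching_vertices V E = {v \<in> V. branching E v}"

definition CT_star :: "nat \<Rightarrow> nat \<Rightarrow> (nat set \<times> nat set set) set" where
  "CT_star n b = {(V, E). chemical_tree V E \<and> card V = n
                    \<and> card (branching_vertices V E) = b}"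

definition M2 :: "nat set set \<Rightarrow> nat" where
  "M2 E = (\<Sum>e\<in>E. \<Prod>v\<in>e. degree E v)"

definition pendent_path :: "nat set \<Rightarrow> nat set set \<Rightarrow> nat list \<Rightarrow> bool" where
  "pendent_path V E p \<longleftrightarrow> length p \<ge> 2 \<and> distinct p \<and> set p \<subseteq> V
     \<and> (\<forall>i. i + 1 < length p \<longrightarrow> adj E (p ! i) (p ! (i + 1)))
     \<and> pendent E (hd p) \<and> branching E (last p)
     \<and> (\<forall>i. 0 < i \<and> i + 1 < length p \<longrightarrow> degree E (p ! i) = 2)"

definition path_length :: "nat list \<Rightarrow> nat" where
  "path_length p = length p - 1"

end

theory Submission
  imports Defs
begin

text \<open>Let \<open>u\<^sub>0u\<^sub>1u\<^sub>2\<cdots>\<close> be a pendent path of length at least 3, so that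
  \<open>d(u\<^sub>0) = 1\<close> and \<open>d(u\<^sub>1) = d(u\<^sub>2) = 2\<close>, and let \<open>x\<close> be a pendent vertex attached to a
  branching vertex \<open>w\<close>. Moving the leaf \<open>u\<^sub>0\<close> from \<open>u\<^sub>1\<close> to \<open>x\<close> keeps the tree chemical, keeps
  its order and its branching vertices, and changes only the weights of the edges
  \<open>u\<^sub>0u\<^sub>1 \<mapsto> u\<^sub>0x\<close> (2 to 2), \<open>u\<^sub>1u\<^sub>2\<close> (4 to 2) and \<open>xw\<close> (\<open>d(w)\<close> to \<open>2d(w)\<close>).
  Hence \<open>M\<^sub>2\<close> grows by \<open>d(w) - 2 > 0\<close>, contradicting maximality.\<close>

definition move_leaf :: "nat set set \<Rightarrow> nat \<Rightarrow> nat \<Rightarrow> nat \<Rightarrow> nat set set" where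
  "move_leaf E v u x = insert {v, x} (E - {{v, u}})"

lemma simple_graph_finite_edges: "simple_graph V E \<Longrightarrow> finite E"
proof -
  assume sg: "simple_graph V E"
  then have "E \<subseteq> Pow V" by (force simp: simple_graph_def)
  then show ?thesis using sg finite_subset unfolding simple_graph_def by blast
qed

lemma simple_graph_edge_neq: "simple_graph V E \<Longrightarrow> {u, v} \<in> E \<Longrightarrow> u \<noteq> v"
  unfolding simple_graph_def by (metis doubleton_eq_iff insert_absorb2)

lemma incident_edges_pendent:
  assumes "degree E v = 1" "{v, u} \<in> E"
  shows "{e \<in> E. v \<in> e} = {{v, u}}"
proof -
  obtain e where "{e \<in> E. v \<in> e} = {e}"
    using assms(1) card_1_singletonE unfolding degree_def by metis
  moreover have "{v, u} \<in> {e \<in> E. v \<in> e}" using assms(2) by simp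
  ultimately show ?thesis by simp
qed

lemma pendent_neighbour_unique:
  assumes "degree E v = 1" "{v, u} \<in> E" "{v, y} \<in> E"
  shows "y = u"
proof -
  have "{v, y} \<in> {e \<in> E. v \<in> e}" using assms(3) by simp
  then have "{v, y} = {v, u}" using incident_edges_pendent[OF assms(1,2)] by simp
  then show ?thesis by (auto simp: doubleton_eq_iff)
qed

lemma incident_edges_degree_2:
  assumes "finite E" "degree E v = 2" "{a, v} \<in> E" "{v, c} \<in> E" "a \<noteq> c"
  shows "{e \<in> E. v \<in> e} = {{a, v}, {v, c}}"
proof (rule sym, rule card_subset_eq)
  show "finite {e \<in> E. v \<in> e}" using assms(1) by simp
  show "{{a, v}, {v, c}} \<subseteq> {e \<in> E. v \<in> e}" using assms(3,4) by simp
  have "{a, v} \<noteq> {v, c}" using assms(5) by (auto simp: doubleton_eq_iff)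
  then show "card {{a, v}, {v, c}} = card {e \<in> E. v \<in> e}"
    using assms(2) by (simp add: degree_def)
qed

lemma degree_move_leaf:
  assumes "finite E" "{v, u} \<in> E" "{v, x} \<notin> E"
  shows "degree (move_leaf E v u x) y =
    degree E y - (if y \<in> {v, u} then 1 else 0) + (if y \<in> {v, x} then 1 else 0)"
proof -
  let ?S = "{e \<in> E. y \<in> e} - {{v, u}}"
  have card_S: "card ?S = degree E y - (if y \<in> {v, u} then 1 else 0)"
    using assms(2) unfolding degree_def by (simp add: card_Diff_singleton_if)
  have incident: "{e \<in> move_leaf E v u x. y \<in> e} =
      (if y \<in> {v, x} then insert {v, x} ?S else ?S)"
    by (auto simp: move_leaf_def)
  show ?thesis
  proof (cases "y \<in> {v, x}")
    case True
    have "card (insert {v, x} ?S) = card ?S + 1" using assms(1,3) by simp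
    then show ?thesis unfolding degree_def incident if_P[OF True] card_S .
  next
    case False
    then show ?thesis unfolding degree_def incident if_not_P[OF False] card_S by simp
  qed
qed

lemma degree_move_leaf_other:
  assumes "finite E" "{v, u} \<in> E" "{v, x} \<notin> E" "y \<noteq> u" "y \<noteq> x"
  shows "degree (move_leaf E v u x) y = degree E y"
proof (cases "y = v")
  case True
  have "{e \<in> E. v \<in> e} \<noteq> {}" "finite {e \<in> E. v \<in> e}" using assms(1,2) by auto
  then have "degree E v \<ge> 1" unfolding degree_def by (simp add: Suc_le_eq card_gt_0_iff)
  then show ?thesis using degree_move_leaf[OF assms(1-3), of y] True by simp
next
  case False
  then show ?thesis using degree_move_leaf[OF assms(1-3), of y] assms(4,5) by simp
qed

text \<open>Since the only neighbour of the leaf \<open>z\<close> is \<open>t\<close>, every walk that enters \<open>z\<close> leaves it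
  back to \<open>t\<close>; so a walk between vertices other than \<open>z\<close> can be shortcut to avoid \<open>z\<close>.\<close>
lemma rtrancl_avoid_leaf:
  assumes leaf: "\<And>y. (z, y) \<in> R \<or> (y, z) \<in> R \<Longrightarrow> y = t"
    and "(a, c) \<in> R\<^sup>*" "a \<noteq> z" "c \<noteq> z"
  shows "(a, c) \<in> {(s, s'). (s, s') \<in> R \<and> s \<noteq> z \<and> s' \<noteq> z}\<^sup>*"
proof -
  let ?Q = "{(s, s'). (s, s') \<in> R \<and> s \<noteq> z \<and> s' \<noteq> z}"
  have "(c \<noteq> z \<longrightarrow> (a, c) \<in> ?Q\<^sup>*) \<and> (c = z \<longrightarrow> (a, t) \<in> ?Q\<^sup>*)"
    using assms(2)
  proof (induction rule: rtrancl_induct)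
    case base
    then show ?case using assms(3) by simp
  next
    case (step y y')
    show ?case
    proof (cases "y' = z")
      case True
      then have "y = t" using leaf step(2) by blast
      then show ?thesis using step(3) True by auto
    next
      case False
      show ?thesis
      proof (cases "y = z")
        case True
        then have "y' = t" using leaf step(2) by blast
        then show ?thesis using step(3) True False by auto
      next
        case False
        then show ?thesis
          using step \<open>y' \<noteq> z\<close> by (auto intro: rtrancl_into_rtrancl)
      qed
    qed
  qed
  then show ?thesis using assms(4) by blast
qed

lemma connected_graph_move_leaf:
  assumes conn: "connected_graph V E"
    and leaf: "\<And>y. {v, y} \<in> E \<Longrightarrow> y = u"
    and x: "x \<in> V" "x \<noteq> v"
  shows "connected_graph V (move_leaf E v u x)"
proof -
  let ?R = "{(a, c). adj E a c}" and ?R' = "{(a, c). adj (move_leaf E v u x) a c}"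
  let ?Q = "{(s, s'). (s, s') \<in> ?R \<and> s \<noteq> v \<and> s' \<noteq> v}"
  have Q_sub: "?Q \<subseteq> ?R'"
  proof
    fix q assume "q \<in> ?Q"
    then obtain s t where q: "q = (s, t)" "{s, t} \<in> E" "s \<noteq> v" "t \<noteq> v"
      by (auto simp: adj_def)
    then have "{s, t} \<noteq> {v, u}" by (auto simp: doubleton_eq_iff)
    then show "q \<in> ?R'" using q by (simp add: adj_def move_leaf_def)
  qed
  have leaf_R: "y = u" if "(v, y) \<in> ?R \<or> (y, v) \<in> ?R" for y
    using leaf that by (auto simp: adj_def insert_commute)
  have avoid: "(a, c) \<in> ?R'\<^sup>*" if "a \<in> V" "c \<in> V" "a \<noteq> v" "c \<noteq> v" for a c
  proof -
    have "(a, c) \<in> ?R\<^sup>*" using conn that(1,2) unfolding connected_graph_def by blast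
    then have "(a, c) \<in> ?Q\<^sup>*" using rtrancl_avoid_leaf[OF leaf_R] that(3,4) by blast
    then show ?thesis using rtrancl_mono[OF Q_sub] by blast
  qed
  have edge: "(v, x) \<in> ?R'" "(x, v) \<in> ?R'"
    by (auto simp: adj_def move_leaf_def insert_commute)
  have via_x: "(a, x) \<in> ?R'\<^sup>* \<and> (x, a) \<in> ?R'\<^sup>*" if "a \<in> V" for a
  proof (cases "a = v")
    case True
    then show ?thesis using edge by blast
  next
    case False
    then show ?thesis using avoid that x by blast
  qed
  show ?thesis
    unfolding connected_graph_def
  proof (intro ballI)
    fix a c assume "a \<in> V" "c \<in> V"
    then show "(a, c) \<in> ?R'\<^sup>*" using via_x by (blast intro: rtrancl_trans)
  qed
qed

lemma move_leaf_in_CT_star: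
  assumes ct: "(V, E) \<in> CT_star n b"
    and v: "degree E v = 1" "{v, u} \<in> E"
    and x: "x \<in> V" "x \<noteq> v" "{v, x} \<notin> E"
    and u_deg: "degree E u \<noteq> 3" and x_deg: "degree E x \<noteq> 2" "degree E x < 4"
  shows "(V, move_leaf E v u x) \<in> CT_star n b"
proof -
  let ?E' = "move_leaf E v u x"
  have tree: "simple_graph V E" "V \<noteq> {}" "connected_graph V E" "card E + 1 = card V"
    and deg4: "\<forall>y\<in>V. degree E y \<le> 4"
    using ct by (auto simp: CT_star_def chemical_tree_def is_tree_def)
  have fin: "finite E" using tree(1) by (rule simple_graph_finite_edges)
  have "u \<noteq> v" using simple_graph_edge_neq[OF tree(1) v(2)] by simp
  moreover have "u \<noteq> x" using v(2) x(3) by blast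
  ultimately have deg_u: "degree ?E' u = degree E u - 1"
    and deg_x: "degree ?E' x = degree E x + 1"
    using degree_move_leaf[OF fin v(2) x(3)] x(2) by auto
  note deg_other = degree_move_leaf_other[OF fin v(2) x(3)]
  have "v \<in> V" using tree(1) v(2) unfolding simple_graph_def by (metis doubleton_eq_iff)
  then have "simple_graph V ?E'"
    using tree(1) x unfolding simple_graph_def move_leaf_def by blast
  moreover have "card ?E' = card E"
  proof -
    have "card E > 0" using fin v(2) card_gt_0_iff by blast
    then show ?thesis using fin v(2) x(3) by (simp add: move_leaf_def)
  qed
  moreover have "connected_graph V ?E'"
    using connected_graph_move_leaf[OF tree(3) _ x(1,2)] pendent_neighbour_unique[OF v] by blast
  moreover have "degree ?E' y \<le> 4" if "y \<in> V" for y
    using deg4 that deg_u deg_x x_deg(2) deg_other[of y]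
    by (cases "y = u \<or> y = x") auto
  moreover have "branching_vertices V ?E' = branching_vertices V E"
  proof -
    have "2 < degree ?E' y \<longleftrightarrow> 2 < degree E y" for y
      using deg_u deg_x u_deg x_deg(1) deg_other[of y] by (cases "y = u \<or> y = x") auto
    then show ?thesis unfolding branching_vertices_def branching_def by simp
  qed
  ultimately show ?thesis
    using ct tree by (auto simp: CT_star_def chemical_tree_def is_tree_def)
qed

lemma M2_split:
  assumes "finite E" "A \<subseteq> E"
  shows "M2 E = (\<Sum>e\<in>A. \<Prod>y\<in>e. degree E y) + (\<Sum>e\<in>E - A. \<Prod>y\<in>e. degree E y)"
  using sum.subset_diff[OF assms(2,1)] unfolding M2_def by (simp add: add.commute)

lemma M2_move_leaf_less:
  assumes sg: "simple_graph V E"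
    and edges: "{v, u} \<in> E" "{u, u'} \<in> E" "{x, w} \<in> E"
    and deg: "degree E v = 1" "degree E u = 2" "degree E u' = 2" "degree E x = 1"
      "degree E w \<ge> 3"
    and "x \<noteq> v"
  shows "M2 E < M2 (move_leaf E v u x)"
proof -
  let ?E' = "move_leaf E v u x"
  have fin: "finite E" using sg by (rule simple_graph_finite_edges)
  have vertices: "v \<noteq> u" "u \<noteq> u'" "x \<noteq> w" "v \<noteq> u'" "x \<noteq> u" "x \<noteq> u'"
      "w \<noteq> v" "w \<noteq> u" "w \<noteq> u'" "x \<noteq> v"
    using simple_graph_edge_neq[OF sg] edges deg \<open>x \<noteq> v\<close> by auto
  then have edges_neq: "{v, u} \<noteq> {u, u'}" "{v, u} \<noteq> {x, w}" "{u, u'} \<noteq> {x, w}"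
      "{v, x} \<noteq> {u, u'}" "{v, x} \<noteq> {x, w}"
    by (simp_all add: doubleton_eq_iff)
  have vx: "{v, x} \<notin> E"
    using pendent_neighbour_unique[OF deg(1) edges(1)] \<open>x \<noteq> u\<close> by blast
  have inc: "{e \<in> E. v \<in> e} = {{v, u}}" "{e \<in> E. u \<in> e} = {{v, u}, {u, u'}}"
      "{e \<in> E. x \<in> e} = {{x, w}}"
    using incident_edges_pendent[OF deg(1) edges(1)] incident_edges_pendent[OF deg(4) edges(3)]
      incident_edges_degree_2[OF fin deg(2) edges(1,2) \<open>v \<noteq> u'\<close>] by simp_all
  define A where "A = {{v, u}, {u, u'}, {x, w}}"
  define A' where "A' = {{v, x}, {u, u'}, {x, w}}"
  have "A \<subseteq> E" "A' \<subseteq> ?E'"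
    using edges edges_neq unfolding A_def A'_def move_leaf_def by simp_all
  have rest: "?E' - A' = E - A" using vx unfolding A_def A'_def move_leaf_def by blast
  have deg': "degree ?E' v = 1" "degree ?E' u = 1" "degree ?E' x = 2" "degree ?E' u' = 2"
      "degree ?E' w = degree E w"
    using degree_move_leaf[OF fin edges(1) vx] deg vertices by simp_all
  have "degree ?E' y = degree E y" if "e \<in> E - A" "y \<in> e" for e y
  proof -
    have "y \<noteq> u" "y \<noteq> x" using that inc unfolding A_def by blast+
    then show ?thesis by (rule degree_move_leaf_other[OF fin edges(1) vx])
  qed
  then have "(\<Sum>e\<in>?E' - A'. \<Prod>y\<in>e. degree ?E' y) = (\<Sum>e\<in>E - A. \<Prod>y\<in>e. degree E y)"
    unfolding rest by (intro sum.cong prod.cong) auto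
  moreover have "M2 E = 1 * 2 + 2 * 2 + 1 * degree E w + (\<Sum>e\<in>E - A. \<Prod>y\<in>e. degree E y)"
    using M2_split[OF fin \<open>A \<subseteq> E\<close>] edges_neq vertices deg unfolding A_def by simp
  moreover have "M2 ?E' = 1 * 2 + 1 * 2 + 2 * degree E w + (\<Sum>e\<in>?E' - A'. \<Prod>y\<in>e. degree ?E' y)"
    using M2_split[OF _ \<open>A' \<subseteq> ?E'\<close>] fin edges_neq vertices deg'
    unfolding A'_def by (simp add: move_leaf_def)
  ultimately show ?thesis using deg(5) by linarith
qed

lemma pendent_path_initial_segment:
  assumes "pendent_path V E p" "path_length p > 2"
  obtains u\<^sub>0 u\<^sub>1 u\<^sub>2 where "{u\<^sub>0, u\<^sub>1} \<in> E" "{u\<^sub>1, u\<^sub>2} \<in> E"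
    "degree E u\<^sub>0 = 1" "degree E u\<^sub>1 = 2" "degree E u\<^sub>2 = 2"
proof (rule that)
  have len: "length p \<ge> 4" using assms(2) by (simp add: path_length_def)
  have adj: "\<And>i. i + 1 < length p \<Longrightarrow> {p ! i, p ! (i + 1)} \<in> E"
    and pend: "degree E (hd p) = 1"
    and inner: "\<And>i. 0 < i \<Longrightarrow> i + 1 < length p \<Longrightarrow> degree E (p ! i) = 2"
    using assms(1) by (auto simp: pendent_path_def adj_def pendent_def)
  show "{p ! 0, p ! 1} \<in> E" using adj[of 0] len by simp
  show "{p ! 1, p ! 2} \<in> E" using adj[of 1] len by (simp add: numeral_2_eq_2)
  show "degree E (p ! 0) = 1" using pend len by (cases p) auto
  show "degree E (p ! 1) = 2" using inner[of 1] len by simp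
  show "degree E (p ! 2) = 2" using inner[of 2] len by simp
qed

lemma M2_not_maximal_if_long_pendent_path:
  assumes ct: "(V, E) \<in> CT_star n b"
    and path: "pendent_path V E p" "path_length p > 2"
    and x: "x \<in> V" "pendent E x" and w: "branching E w" "adj E x w"
  shows "\<exists>E'. (V, E') \<in> CT_star n b \<and> M2 E < M2 E'"
proof -
  obtain u\<^sub>0 u\<^sub>1 u\<^sub>2 where edges: "{u\<^sub>0, u\<^sub>1} \<in> E" "{u\<^sub>1, u\<^sub>2} \<in> E"
    and deg: "degree E u\<^sub>0 = 1" "degree E u\<^sub>1 = 2" "degree E u\<^sub>2 = 2"
    using pendent_path_initial_segment[OF path] .
  have sg: "simple_graph V E" using ct by (simp add: CT_star_def chemical_tree_def is_tree_def)
  have xw: "{x, w} \<in> E" "degree E x = 1" "degree E w \<ge> 3"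
    using x w by (simp_all add: adj_def pendent_def branching_def)
  have "x \<noteq> u\<^sub>0"
  proof
    assume "x = u\<^sub>0"
    then have "w = u\<^sub>1" using pendent_neighbour_unique[OF deg(1) edges(1)] xw(1) by simp
    then show False using deg(2) xw(3) by simp
  qed
  moreover have "{u\<^sub>0, x} \<notin> E"
    using pendent_neighbour_unique[OF deg(1) edges(1)] deg(2) xw(2) by force
  ultimately have "(V, move_leaf E u\<^sub>0 u\<^sub>1 x) \<in> CT_star n b"
    using move_leaf_in_CT_star[OF ct deg(1) edges(1) x(1)] deg(2) xw(2) by simp
  moreover have "M2 E < M2 (move_leaf E u\<^sub>0 u\<^sub>1 x)"
    using M2_move_leaf_less[OF sg edges xw(1) deg xw(2,3)] \<open>x \<noteq> u\<^sub>0\<close> .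
  ultimately show ?thesis by blast
qed

theorem lemma12:
  fixes n b :: nat and V :: "nat set" and E :: "nat set set"
  assumes "1 \<le> b" and "real b < real n / 2 - 1"
    and "(V, E) \<in> CT_star n b"
    and "\<forall>(V', E') \<in> CT_star n b. M2 E' \<le> M2 E"
    and "\<exists>u\<in>V. \<exists>v\<in>V. pendent E u \<and> branching E v \<and> adj E u v"
  shows "\<not> (\<exists>p. pendent_path V E p \<and> path_length p > 2)"
proof
  assume "\<exists>p. pendent_path V E p \<and> path_length p > 2"
  then obtain p where "pendent_path V E p" "path_length p > 2" by blast
  moreover obtain x w where "x \<in> V" "pendent E x" "branching E w" "adj E x w"
    using assms(5) by blast
  ultimately obtain E' where "(V, E') \<in> CT_star n b" "M2 E < M2 E'"
    using M2_not_maximal_if_long_pendent_path[OF assms(3)] by blast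
  then show False using assms(4) by fastforce
qed

end
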